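(* For $z\in L_T$, $s>0$ and $T>e$, \[P(X(sT)=r(T)z)\ge\exp\Big(-a(T)T\big(q|z|+\mathcal{E}^1_T(s,|z|)\big)\Big).\]
   Context: $X(u)$, $u\ge0$, is a continuous-time simple symmetric random walk on $\mathbb{Z}^d$ started at $0$, jumping to each of its $2d$ neighbours at rate $1$, under a probability measure $P$. $|\cdot|$ is the $\ell_1$-norm. $\alpha>d$, $q=d/(\alpha-d)$, $a(T)=(T/\log T)^q$, $r(T)=(T/\log T)^{q+1}$, $L_T=\{z\in\mathbb{R}^d: r(T)z\in\mathbb{Z}^d\}$. For $s>0$, $R\ge0$: $\mathcal{E}^1_T(s,R)=\frac{R}{\log T}(\log R-\log s)+\frac{2ds}{a(T)}$ (with the convention $0\log 0=0$). *)

theory Defs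
  imports "HOL-Analysis.Analysis"
begin

text \<open>The lattice Z^d is rendered as int^'n, with d = CARD('n).\<close>

definition unit_steps :: "(int^'n) set" where
  "unit_steps = {e. \<exists>i. \<exists>\<sigma>\<in>{1, -1}. e = (\<chi> j. if j = i then \<sigma> else 0)}"

fun walk_count :: "nat \<Rightarrow> int^'n \<Rightarrow> nat" where
  "walk_count 0 x = (if x = 0 then 1 else 0)"
| "walk_count (Suc n) x = (\<Sum>e\<in>unit_steps. walk_count n (x - e))"

text \<open>P(X(t) = x) for the continuous-time simple symmetric random walk started at 0,
  jumping to each of its 2d neighbours at rate 1: the number of jumps up to time t is
  Poisson(2dt), and given n jumps the position is the n-step discrete SRW.\<close>
definition srw_prob :: "real \<Rightarrow> int^'n \<Rightarrow> real" where
  "srw_prob t x = (\<Sum>n. exp (-(2 * real CARD('n) * t)) * (2 * real CARD('n) * t) ^ n / fact n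
                        * (real (walk_count n x) / (2 * real CARD('n)) ^ n))"

definition l1norm :: "real^'n \<Rightarrow> real" where
  "l1norm z = (\<Sum>i\<in>UNIV. \<bar>z $ i\<bar>)"

definition qexp :: "real \<Rightarrow> nat \<Rightarrow> real" where
  "qexp \<alpha> d = real d / (\<alpha> - real d)"

definition aT :: "real \<Rightarrow> nat \<Rightarrow> real \<Rightarrow> real" where
  "aT \<alpha> d T = (T / ln T) powr (qexp \<alpha> d)"

definition rT :: "real \<Rightarrow> nat \<Rightarrow> real \<Rightarrow> real" where
  "rT \<alpha> d T = (T / ln T) powr (qexp \<alpha> d + 1)"

text \<open>E^1_T(s,R), with the convention 0 log 0 = 0.\<close>
definition E1 :: "real \<Rightarrow> nat \<Rightarrow> real \<Rightarrow> real \<Rightarrow> real \<Rightarrow> real" where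
  "E1 \<alpha> d T s R = (if R = 0 then 0 else R / ln T * (ln R - ln s)) + 2 * real d * s / aT \<alpha> d T"

end

theory Submission imports Defs begin

text \<open>Keep only the Poisson term with exactly N = |x| = r(T) |z| jumps, and of the N-step
  paths only one shortest path to x; this gives
  P(X(t) = x) \<ge> e^{-2dt} t^N / N! \<ge> exp (-(2dt + N (ln N - ln t))) by N! \<le> N^N.
  Since ln r(T) \<le> (q + 1) ln T and a(T) T = r(T) ln T, the last exponent is bounded by the
  one in the statement.\<close>

definition unit_step :: "'n \<Rightarrow> int \<Rightarrow> int^'n" where
  "unit_step i \<sigma> = (\<chi> j. if j = i then \<sigma> else 0)"

lemma unit_steps_eq_image: "unit_steps = (\<lambda>(i, \<sigma>). unit_step i \<sigma>) ` (UNIV \<times> {1, -1})"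
  unfolding unit_steps_def unit_step_def by fastforce

lemma finite_unit_steps: "finite (unit_steps :: (int^'n) set)"
  unfolding unit_steps_eq_image by simp

lemma card_unit_steps_le: "card (unit_steps :: (int^'n) set) \<le> 2 * CARD('n)"
proof -
  have "card (unit_steps :: (int^'n) set) \<le> card (UNIV \<times> {1::int, -1} :: ('n \<times> int) set)"
    unfolding unit_steps_eq_image by (rule card_image_le) simp
  also have "\<dots> = 2 * CARD('n)" by (simp add: card_cartesian_product)
  finally show ?thesis .
qed

lemma walk_count_le_power: "walk_count n (x :: int^'n) \<le> (2 * CARD('n)) ^ n"
proof (induction n arbitrary: x)
  case 0
  then show ?case by simp
next
  case (Suc n)
  have "walk_count (Suc n) x \<le> card (unit_steps :: (int^'n) set) * (2 * CARD('n)) ^ n"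
    using sum_bounded_above[of "unit_steps :: (int^'n) set" "\<lambda>e. walk_count n (x - e)"] Suc
    by simp
  also have "\<dots> \<le> 2 * CARD('n) * (2 * CARD('n)) ^ n"
    using card_unit_steps_le by (intro mult_right_mono) auto
  finally show ?case by simp
qed

lemma walk_count_l1_pos:
  fixes x :: "int^'n"
  assumes "(\<Sum>i\<in>UNIV. \<bar>x $ i\<bar>) = int m"
  shows "walk_count m x \<ge> 1"
  using assms
proof (induction m arbitrary: x)
  case 0
  then have "x = 0"
    using sum_nonneg_eq_0_iff[of "UNIV :: 'n set" "\<lambda>i. \<bar>x $ i\<bar>"] by (simp add: vec_eq_iff)
  then show ?case by simp
next
  case (Suc m)
  obtain i where i: "x $ i \<noteq> 0"
    using Suc.prems by (metis (no_types, lifting) abs_zero of_nat_Suc of_nat_neq_0 sum.neutral)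
  define e where "e = unit_step i (sgn (x $ i))"
  have e: "e \<in> unit_steps"
    unfolding unit_steps_eq_image e_def using i by (auto simp: sgn_if)
  have "\<bar>(x - e) $ j\<bar> = \<bar>x $ j\<bar> - (if j = i then 1 else 0)" for j
    using i by (auto simp: e_def unit_step_def sgn_if)
  then have "(\<Sum>j\<in>UNIV. \<bar>(x - e) $ j\<bar>) = int m"
    using Suc.prems by (simp add: sum_subtractf)
  then have "1 \<le> walk_count m (x - e)" by (rule Suc.IH)
  also have "\<dots> \<le> (\<Sum>e\<in>unit_steps. walk_count m (x - e))"
    by (rule member_le_sum[OF e _ finite_unit_steps]) simp
  finally show ?case by simp
qed

lemma srw_prob_ge_jump_term:
  fixes x :: "int^'n"
  assumes "t \<ge> 0"
  shows "exp (-(2 * real CARD('n) * t)) * (2 * real CARD('n) * t) ^ N / fact N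
           * (real (walk_count N x) / (2 * real CARD('n)) ^ N) \<le> srw_prob t x"
proof -
  define c where "c = 2 * real CARD('n) * t"
  define f where "f n = exp (-c) * c ^ n / fact n * (real (walk_count n x) / (2 * real CARD('n)) ^ n)"
    for n
  have c: "c \<ge> 0" using assms by (simp add: c_def)
  have f_nonneg: "f n \<ge> 0" for n using c by (simp add: f_def)
  have f_le: "f n \<le> exp (-c) * (inverse (fact n) * c ^ n)" for n
  proof -
    have "real (walk_count n x) \<le> (2 * real CARD('n)) ^ n"
      using walk_count_le_power[of n x] by (metis of_nat_le_iff of_nat_mult of_nat_numeral of_nat_power)
    then have "real (walk_count n x) / (2 * real CARD('n)) ^ n \<le> 1"
      by (simp add: divide_le_eq_1)
    then have "f n \<le> exp (-c) * c ^ n / fact n * 1"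
      unfolding f_def using c by (intro mult_left_mono) simp_all
    then show ?thesis by (simp add: field_simps)
  qed
  have "summable (\<lambda>n. exp (-c) * (inverse (fact n) * c ^ n))"
    by (intro summable_mult summable_exp)
  then have "summable f"
    by (rule summable_comparison_test'[of _ 0]) (use f_nonneg f_le in auto)
  then have "f N \<le> suminf f"
    using sum_le_suminf[of f "{N}"] f_nonneg by simp
  then show ?thesis unfolding srw_prob_def f_def c_def .
qed

lemma srw_prob_ge_poisson_l1:
  fixes x :: "int^'n"
  assumes "t \<ge> 0" and "(\<Sum>i\<in>UNIV. \<bar>x $ i\<bar>) = int N"
  shows "exp (-(2 * real CARD('n) * t)) * t ^ N / fact N \<le> srw_prob t x"
proof -
  define d where "d = 2 * real CARD('n)"
  have d: "d > 0" by (simp add: d_def)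
  have "exp (-(d * t)) * t ^ N / fact N = exp (-(d * t)) * (d * t) ^ N / fact N * (1 / d ^ N)"
    using d by (simp add: power_mult_distrib field_simps)
  also have "\<dots> \<le> exp (-(d * t)) * (d * t) ^ N / fact N * (real (walk_count N x) / d ^ N)"
    using walk_count_l1_pos[OF assms(2)] d assms(1) by (intro mult_left_mono divide_right_mono) auto
  also have "\<dots> \<le> srw_prob t x"
    using srw_prob_ge_jump_term[OF assms(1), of N x] by (simp add: d_def)
  finally show ?thesis by (simp add: d_def mult.assoc)
qed

lemma one_less_ln:
  fixes T :: real
  assumes "exp 1 < T"
  shows "1 < ln T"
proof -
  have "0 < T" using assms exp_gt_zero[of 1] by linarith
  then show ?thesis using ln_less_cancel_iff[of "exp 1" T] assms by simp
qed

lemma ln_fact_le: "ln (fact n :: real) \<le> n * ln n"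
proof (cases "n = 0")
  case False
  have "(fact n :: real) \<le> real n ^ n" using fact_le_power[of n, where 'a = real] by simp
  then have "ln (fact n) \<le> ln (real n ^ n)" using False by (subst ln_le_cancel_iff) auto
  then show ?thesis by (simp add: ln_realpow)
qed simp

lemma poisson_weight_ge:
  fixes c t :: real
  assumes "t > 0"
  shows "exp (-(c + n * (ln n - ln t))) \<le> exp (-c) * t ^ n / fact n"
proof -
  have "t ^ n / fact n = exp (n * ln t - ln (fact n))"
    using assms by (simp add: exp_diff exp_of_nat_mult)
  then have "exp (-c) * t ^ n / fact n = exp (-c + (n * ln t - ln (fact n)))"
    by (metis exp_add times_divide_eq_right)
  then show ?thesis using ln_fact_le[of n] by (simp add: right_diff_distrib)
qed

lemma rT_eq_aT_mult:
  assumes "T > 1"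
  shows "rT \<alpha> d T = aT \<alpha> d T * (T / ln T)"
  using assms by (simp add: rT_def aT_def powr_add)

lemma ln_rT_le:
  assumes "\<alpha> > real d" and "T > exp 1"
  shows "ln (rT \<alpha> d T) \<le> (qexp \<alpha> d + 1) * ln T"
proof -
  have L: "1 < ln T" using assms(2) by (rule one_less_ln)
  have q: "qexp \<alpha> d \<ge> 0" using assms(1) by (simp add: qexp_def)
  have "ln (rT \<alpha> d T) = (qexp \<alpha> d + 1) * (ln T - ln (ln T))"
    using L by (simp add: rT_def ln_div)
  also have "\<dots> \<le> (qexp \<alpha> d + 1) * ln T"
    using q L by (intro mult_left_mono) auto
  finally show ?thesis .
qed

lemma scaled_exponent_ge:
  assumes "\<alpha> > real d" and "T > exp 1" and "s > 0" and "R \<ge> 0"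
  defines "N \<equiv> rT \<alpha> d T * R"
  shows "2 * d * (s * T) + N * (ln N - ln (s * T))
           \<le> aT \<alpha> d T * T * (qexp \<alpha> d * R + E1 \<alpha> d T s R)"
proof -
  define a r q L where "a = aT \<alpha> d T" and "r = rT \<alpha> d T" and "q = qexp \<alpha> d" and "L = ln T"
  have L: "1 < L" unfolding L_def using assms(2) by (rule one_less_ln)
  have T: "1 < T" using assms(2) one_less_exp_iff[of 1] by linarith
  have a: "0 < a" using T L by (simp add: a_def aT_def L_def)
  have aT: "a * T = r * L" using rT_eq_aT_mult[OF T] L by (simp add: a_def r_def L_def)
  have r: "0 < r" using aT a T L by (metis mult_pos_pos zero_less_mult_pos2 zero_less_one less_trans)
  have "a * T * (q * R + E1 \<alpha> d T s R)
          = q * (a * T) * R + (if R = 0 then 0 else (a * T) * R / L * (ln R - ln s)) + 2 * d * (s * T)"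
    using a by (simp add: E1_def a_def L_def algebra_simps diff_divide_distrib)
  also have "\<dots> = q * N * L + N * (ln R - ln s) + 2 * d * (s * T)"
    using L by (simp add: aT N_def r_def)
  finally have split: "a * T * (q * R + E1 \<alpha> d T s R) = q * N * L + N * (ln R - ln s) + 2 * d * (s * T)" .
  have "2 * d * (s * T) + N * (ln N - ln (s * T)) \<le> q * N * L + N * (ln R - ln s) + 2 * d * (s * T)"
  proof (cases "R = 0")
    case False
    then have R: "R > 0" using assms(4) by simp
    have "ln N - ln (s * T) = ln r + ln R - ln s - L"
      using r R assms(3) T by (simp add: N_def r_def L_def ln_mult)
    also have "\<dots> \<le> q * L + ln R - ln s"
      using ln_rT_le[OF assms(1,2)] by (simp add: r_def q_def L_def algebra_simps)
    finally have "N * (ln N - ln (s * T)) \<le> N * (q * L + ln R - ln s)"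
      using r R by (intro mult_left_mono) (simp_all add: N_def r_def)
    then show ?thesis by (simp add: algebra_simps)
  qed (simp add: N_def)
  then show ?thesis using split unfolding a_def q_def by linarith
qed

theorem lemma2p3:
  fixes \<alpha> T s :: real and z :: "real^'n" and x :: "int^'n"
  assumes "\<alpha> > real CARD('n)"
    and "T > exp 1" and "s > 0"
    and "\<forall>i. real_of_int (x $ i) = rT \<alpha> CARD('n) T * z $ i"
  shows "srw_prob (s * T) x \<ge>
    exp (- (aT \<alpha> CARD('n) T * T * (qexp \<alpha> CARD('n) * l1norm z + E1 \<alpha> CARD('n) T s (l1norm z))))"
proof -
  define r where "r = rT \<alpha> CARD('n) T"
  define N where "N = nat (\<Sum>i\<in>UNIV. \<bar>x $ i\<bar>)"
  have t: "s * T > 0" using assms(2,3) by (smt (verit) exp_gt_zero mult_pos_pos)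
  have r: "r \<ge> 0" by (simp add: r_def rT_def)
  have N: "(\<Sum>i\<in>UNIV. \<bar>x $ i\<bar>) = int N" by (simp add: N_def sum_nonneg)
  have "real N = (\<Sum>i\<in>UNIV. \<bar>real_of_int (x $ i)\<bar>)"
    using arg_cong[OF N, of real_of_int] by simp
  also have "\<dots> = r * l1norm z"
    using assms(4) r by (simp add: r_def[symmetric] abs_mult l1norm_def sum_distrib_left)
  finally have N_eq: "real N = r * l1norm z" .
  have "exp (- (aT \<alpha> CARD('n) T * T * (qexp \<alpha> CARD('n) * l1norm z + E1 \<alpha> CARD('n) T s (l1norm z))))
      \<le> exp (-(2 * real CARD('n) * (s * T) + N * (ln N - ln (s * T))))"
    using scaled_exponent_ge[OF assms(1-3), of "l1norm z"]
    by (simp add: N_eq r_def l1norm_def sum_nonneg)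
  also have "\<dots> \<le> exp (-(2 * real CARD('n) * (s * T))) * (s * T) ^ N / fact N"
    by (rule poisson_weight_ge[OF t])
  also have "\<dots> \<le> srw_prob (s * T) x"
    using srw_prob_ge_poisson_l1[OF less_imp_le[OF t] N] .
  finally show ?thesis .
qed

end
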